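(* Let $(A,\to,1)$ be an algebra of type $(2,0)$. Then: (a) (Re), (L), (Ex) and ( ** ) imply (p-2); (b) (Ex), (B), ( * ) and (pi) imply (p-1); (c) (p-1), (p-2) and (An) imply (pimpl); (d) (Re), (Ex), (B), ( ** ), ( * ), (L), (An) and (pi) together imply (pimpl).
   Context: Properties, required for all $x,y,z\in A$: (Re) $x\to x=1$; (L) $x\to 1=1$; (Ex) $x\to(y\to z)=y\to(x\to z)$; (B) $(y\to z)\to((x\to y)\to(x\to z))=1$; ( * ) $y\to z=1$ implies $(x\to y)\to(x\to z)=1$; ( ** ) $y\to z=1$ implies $(z\to x)\to(y\to x)=1$; (An) $x\to y=1$ and $y\to x=1$ imply $x=y$; (pimpl) $x\to(y\to z)=(x\to y)\to(x\to z)$; (pi) $y\to(y\to x)=y\to x$; (p-1) $(x\to(y\to z))\to((x\to y)\to(x\to z))=1$; (p-2) $((x\to y)\to(x\to z))\to(x\to(y\to z))=1$. *)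

theory Defs
  imports Main
begin

definition alg20 :: "'a set \<Rightarrow> ('a \<Rightarrow> 'a \<Rightarrow> 'a) \<Rightarrow> 'a \<Rightarrow> bool" where
  "alg20 A imp one \<longleftrightarrow> one \<in> A \<and> (\<forall>x\<in>A. \<forall>y\<in>A. imp x y \<in> A)"

definition prop_Re where
  "prop_Re A imp one \<longleftrightarrow> (\<forall>x\<in>A. imp x x = one)"
definition prop_L where
  "prop_L A imp one \<longleftrightarrow> (\<forall>x\<in>A. imp x one = one)"
definition prop_Ex where
  "prop_Ex A imp (one::'a) \<longleftrightarrow> (\<forall>x\<in>A. \<forall>y\<in>A. \<forall>z\<in>A. imp x (imp y z) = imp y (imp x z))"
definition prop_B where
  "prop_B A imp one \<longleftrightarrow> (\<forall>x\<in>A. \<forall>y\<in>A. \<forall>z\<in>A. imp (imp y z) (imp (imp x y) (imp x z)) = one)"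
definition prop_star where
  "prop_star A imp one \<longleftrightarrow> (\<forall>x\<in>A. \<forall>y\<in>A. \<forall>z\<in>A. imp y z = one \<longrightarrow> imp (imp x y) (imp x z) = one)"
definition prop_starstar where
  "prop_starstar A imp one \<longleftrightarrow> (\<forall>x\<in>A. \<forall>y\<in>A. \<forall>z\<in>A. imp y z = one \<longrightarrow> imp (imp z x) (imp y x) = one)"
definition prop_An where
  "prop_An A imp one \<longleftrightarrow> (\<forall>x\<in>A. \<forall>y\<in>A. imp x y = one \<and> imp y x = one \<longrightarrow> x = y)"
definition prop_pimpl where
  "prop_pimpl A imp (one::'a) \<longleftrightarrow> (\<forall>x\<in>A. \<forall>y\<in>A. \<forall>z\<in>A. imp x (imp y z) = imp (imp x y) (imp x z))"
definition prop_pi where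
  "prop_pi A imp (one::'a) \<longleftrightarrow> (\<forall>x\<in>A. \<forall>y\<in>A. imp y (imp y x) = imp y x)"
definition prop_p1 where
  "prop_p1 A imp one \<longleftrightarrow> (\<forall>x\<in>A. \<forall>y\<in>A. \<forall>z\<in>A. imp (imp x (imp y z)) (imp (imp x y) (imp x z)) = one)"
definition prop_p2 where
  "prop_p2 A imp one \<longleftrightarrow> (\<forall>x\<in>A. \<forall>y\<in>A. \<forall>z\<in>A. imp (imp (imp x y) (imp x z)) (imp x (imp y z)) = one)"

end

theory Submission
  imports Defs
begin

text \<open>For (p-2), (Re), (L) and (Ex) give the law y \<rightarrow> (x \<rightarrow> y) = 1; applying (**) to it
  and exchanging premises yields (p-2). For (p-1), prefix the instance of (B) with x by (*),
  exchange x with x \<rightarrow> y and contract x \<rightarrow> (x \<rightarrow> z) by (pi). Then (p-1), (p-2) are the two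
  halves of (pimpl), which (An) merges; (d) is the composite of (a), (b) and (c).\<close>

lemma alg20_imp_closed: "alg20 A imp one \<Longrightarrow> x \<in> A \<Longrightarrow> y \<in> A \<Longrightarrow> imp x y \<in> A"
  unfolding alg20_def by blast

lemma prop_ReD: "prop_Re A imp one \<Longrightarrow> x \<in> A \<Longrightarrow> imp x x = one"
  unfolding prop_Re_def by blast

lemma prop_LD: "prop_L A imp one \<Longrightarrow> x \<in> A \<Longrightarrow> imp x one = one"
  unfolding prop_L_def by blast

lemma prop_ExD:
  "prop_Ex A imp one \<Longrightarrow> x \<in> A \<Longrightarrow> y \<in> A \<Longrightarrow> z \<in> A \<Longrightarrow> imp x (imp y z) = imp y (imp x z)"
  unfolding prop_Ex_def by blast

lemma prop_BD:
  "prop_B A imp one \<Longrightarrow> x \<in> A \<Longrightarrow> y \<in> A \<Longrightarrow> z \<in> A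
    \<Longrightarrow> imp (imp y z) (imp (imp x y) (imp x z)) = one"
  unfolding prop_B_def by blast

lemma prop_starD:
  "prop_star A imp one \<Longrightarrow> x \<in> A \<Longrightarrow> y \<in> A \<Longrightarrow> z \<in> A \<Longrightarrow> imp y z = one
    \<Longrightarrow> imp (imp x y) (imp x z) = one"
  unfolding prop_star_def by blast

lemma prop_starstarD:
  "prop_starstar A imp one \<Longrightarrow> x \<in> A \<Longrightarrow> y \<in> A \<Longrightarrow> z \<in> A \<Longrightarrow> imp y z = one
    \<Longrightarrow> imp (imp z x) (imp y x) = one"
  unfolding prop_starstar_def by blast

lemma prop_piD: "prop_pi A imp one \<Longrightarrow> x \<in> A \<Longrightarrow> y \<in> A \<Longrightarrow> imp y (imp y x) = imp y x"
  unfolding prop_pi_def by blast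

lemma prop_p1D:
  "prop_p1 A imp one \<Longrightarrow> x \<in> A \<Longrightarrow> y \<in> A \<Longrightarrow> z \<in> A
    \<Longrightarrow> imp (imp x (imp y z)) (imp (imp x y) (imp x z)) = one"
  unfolding prop_p1_def by blast

lemma prop_p2D:
  "prop_p2 A imp one \<Longrightarrow> x \<in> A \<Longrightarrow> y \<in> A \<Longrightarrow> z \<in> A
    \<Longrightarrow> imp (imp (imp x y) (imp x z)) (imp x (imp y z)) = one"
  unfolding prop_p2_def by blast

lemma prop_AnD:
  "prop_An A imp one \<Longrightarrow> x \<in> A \<Longrightarrow> y \<in> A \<Longrightarrow> imp x y = one \<Longrightarrow> imp y x = one \<Longrightarrow> x = y"
  unfolding prop_An_def by blast

lemma imp_K_eq_one:
  assumes "prop_Re A imp one" "prop_L A imp one" "prop_Ex A imp one" "x \<in> A" "y \<in> A"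
  shows "imp y (imp x y) = one"
proof -
  have "imp y (imp x y) = imp x (imp y y)"
    using prop_ExD[OF assms(3,5,4,5)] .
  also have "\<dots> = one"
    using prop_ReD[OF assms(1,5)] prop_LD[OF assms(2,4)] by simp
  finally show ?thesis .
qed

lemma prop_p2_if_Re_L_Ex_starstar:
  assumes "alg20 A imp one" "prop_Re A imp one" "prop_L A imp one" "prop_Ex A imp one"
    and "prop_starstar A imp one"
  shows "prop_p2 A imp one"
  unfolding prop_p2_def
proof (intro ballI)
  fix x y z assume x: "x \<in> A" and y: "y \<in> A" and z: "z \<in> A"
  have xy: "imp x y \<in> A" and xz: "imp x z \<in> A"
    using alg20_imp_closed[OF assms(1)] x y z by auto
  have "imp (imp (imp x y) (imp x z)) (imp y (imp x z)) = one"
    using prop_starstarD[OF assms(5) xz y xy imp_K_eq_one[OF assms(2-4) x y]] .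
  also have "imp y (imp x z) = imp x (imp y z)"
    using prop_ExD[OF assms(4) y x z] .
  finally show "imp (imp (imp x y) (imp x z)) (imp x (imp y z)) = one" .
qed

lemma prop_p1_if_Ex_B_star_pi:
  assumes "alg20 A imp one" "prop_Ex A imp one" "prop_B A imp one" "prop_star A imp one"
    and "prop_pi A imp one"
  shows "prop_p1 A imp one"
  unfolding prop_p1_def
proof (intro ballI)
  fix x y z assume x: "x \<in> A" and y: "y \<in> A" and z: "z \<in> A"
  have xy: "imp x y \<in> A" and xz: "imp x z \<in> A" and yz: "imp y z \<in> A"
    using alg20_imp_closed[OF assms(1)] x y z by auto
  have "imp (imp x (imp y z)) (imp x (imp (imp x y) (imp x z))) = one"
    using prop_starD[OF assms(4) x yz alg20_imp_closed[OF assms(1) xy xz] prop_BD[OF assms(3) x y z]] .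
  also have "imp x (imp (imp x y) (imp x z)) = imp (imp x y) (imp x (imp x z))"
    using prop_ExD[OF assms(2) x xy xz] .
  also have "imp x (imp x z) = imp x z"
    using prop_piD[OF assms(5) z x] .
  finally show "imp (imp x (imp y z)) (imp (imp x y) (imp x z)) = one" .
qed

lemma prop_pimpl_if_p1_p2_An:
  assumes "alg20 A imp one" "prop_p1 A imp one" "prop_p2 A imp one" "prop_An A imp one"
  shows "prop_pimpl A imp one"
  unfolding prop_pimpl_def
proof (intro ballI)
  fix x y z assume xyz: "x \<in> A" "y \<in> A" "z \<in> A"
  have "imp x (imp y z) \<in> A" "imp (imp x y) (imp x z) \<in> A"
    using alg20_imp_closed[OF assms(1)] xyz by auto
  then show "imp x (imp y z) = imp (imp x y) (imp x z)"
    using prop_AnD[OF assms(4)] prop_p1D[OF assms(2) xyz] prop_p2D[OF assms(3) xyz] by blast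
qed

theorem proposition6p3:
  fixes A :: "'a set" and imp :: "'a \<Rightarrow> 'a \<Rightarrow> 'a" and one :: 'a
  assumes "alg20 A imp one"
  shows "(prop_Re A imp one \<and> prop_L A imp one \<and> prop_Ex A imp one \<and> prop_starstar A imp one
            \<longrightarrow> prop_p2 A imp one)
       \<and> (prop_Ex A imp one \<and> prop_B A imp one \<and> prop_star A imp one \<and> prop_pi A imp one
            \<longrightarrow> prop_p1 A imp one)
       \<and> (prop_p1 A imp one \<and> prop_p2 A imp one \<and> prop_An A imp one
            \<longrightarrow> prop_pimpl A imp one)
       \<and> (prop_Re A imp one \<and> prop_Ex A imp one \<and> prop_B A imp one \<and> prop_starstar A imp one
          \<and> prop_star A imp one \<and> prop_L A imp one \<and> prop_An A imp one \<and> prop_pi A imp one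
            \<longrightarrow> prop_pimpl A imp one)"
  using prop_p2_if_Re_L_Ex_starstar[OF assms] prop_p1_if_Ex_B_star_pi[OF assms]
    prop_pimpl_if_p1_p2_An[OF assms]
  by blast

end
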